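(* Let $n_0\ge2$ be an integer, $s\in\mathbb{C}$ with $\sigma=\operatorname{Re}s>2$, and $\mathcal{D}_{n_0}\in\{\mathcal{X}_{n_0},\mathcal{Y}_{n_0},\mathcal{Z}_{n_0}\}$. Then $$|\mathcal{D}_{n_0}(s)|\le\frac{2(n_0-1)^{2-\sigma}}{\sigma-2}.$$
   Context: Pascal's rhombus consists of integers $r_{i,j}$ for $i\ge0$, $j\in\mathbb{Z}$, with $r_{0,j}=0$ for all $j$, $r_{1,0}=1$, $r_{1,j}=0$ for $j\ne0$, and $r_{i,j}=r_{i-1,j-1}+r_{i-1,j}+r_{i-1,j+1}+r_{i-2,j}$ for $i\ge2$. For $n\ge1$: $x(n)$ is the number of $j$ with $r_{n,j}$ odd; $y(n)$ the number of $j$ with $r_{2n-1,2j}$ odd; $z(n)$ the number of $j$ with $r_{2n,2j-1}$ odd. $\mathcal{X}_{n_0}(s)=\sum_{n\ge n_0}x(n)n^{-s}$, $\mathcal{Y}_{n_0}(s)=\sum_{n\ge n_0}y(n)n^{-s}$, $\mathcal{Z}_{n_0}(s)=\sum_{n\ge n_0}z(n)n^{-s}$. *)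

theory Defs
  imports "HOL-Analysis.Analysis"
begin

fun rhombus :: "nat \<Rightarrow> int \<Rightarrow> int" where
  "rhombus 0 j = 0"
| "rhombus (Suc 0) j = (if j = 0 then 1 else 0)"
| "rhombus (Suc (Suc i)) j =
     rhombus (Suc i) (j - 1) + rhombus (Suc i) j + rhombus (Suc i) (j + 1) + rhombus i j"

definition xcount :: "nat \<Rightarrow> nat" where
  "xcount n = card {j. odd (rhombus n j)}"

definition ycount :: "nat \<Rightarrow> nat" where
  "ycount n = card {j. odd (rhombus (2 * n - 1) (2 * j))}"

definition zcount :: "nat \<Rightarrow> nat" where
  "zcount n = card {j. odd (rhombus (2 * n) (2 * j - 1))}"

definition dser :: "(nat \<Rightarrow> nat) \<Rightarrow> nat \<Rightarrow> complex \<Rightarrow> complex" where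
  "dser d n0 s = (\<Sum>n. of_nat (d (n + n0)) * (of_nat (n + n0)) powr (- s))"

end

theory Submission
  imports Defs
begin

text \<open>Row \<open>i\<close> of the rhombus vanishes outside \<open>\<bar>j\<bar> < i\<close>, so each of \<open>x(n)\<close>, \<open>y(n)\<close>,
  \<open>z(n)\<close> is at most \<open>2n\<close> and the series is dominated by \<open>2 \<Sum>\<^bsub>n \<ge> n0\<^esub> n^(1 - \<sigma>)\<close>.
  By the mean value theorem \<open>n^(1 - \<sigma>) \<le> ((n - 1)^(2 - \<sigma>) - n^(2 - \<sigma>)) / (\<sigma> - 2)\<close>,
  and these bounds telescope to \<open>(n0 - 1)^(2 - \<sigma>) / (\<sigma> - 2)\<close>.\<close>

lemma rhombus_eq_0: "\<bar>j\<bar> \<ge> int i \<Longrightarrow> rhombus i j = 0"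
  by (induction i j rule: rhombus.induct) auto

lemma odd_rhombus_abs_less: "odd (rhombus i j) \<Longrightarrow> \<bar>j\<bar> < int i"
  by (metis even_zero linorder_not_less rhombus_eq_0)

lemma xcount_le: "xcount n \<le> 2 * n"
proof -
  have "{j. odd (rhombus n j)} \<subseteq> {- int n + 1..int n - 1}"
    using odd_rhombus_abs_less by fastforce
  then have "xcount n \<le> card {- int n + 1..int n - 1}"
    unfolding xcount_def by (intro card_mono) auto
  then show ?thesis by simp
qed

lemma ycount_le: "ycount n \<le> 2 * n"
proof -
  have "{j. odd (rhombus (2 * n - 1) (2 * j))} \<subseteq> {- int n + 1..int n - 1}"
    using odd_rhombus_abs_less by fastforce
  then have "ycount n \<le> card {- int n + 1..int n - 1}"
    unfolding ycount_def by (intro card_mono) auto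
  then show ?thesis by simp
qed

lemma zcount_le: "zcount n \<le> 2 * n"
proof -
  have "{j. odd (rhombus (2 * n) (2 * j - 1))} \<subseteq> {- int n + 1..int n}"
    using odd_rhombus_abs_less by fastforce
  then have "zcount n \<le> card {- int n + 1..int n}"
    unfolding zcount_def by (intro card_mono) auto
  then show ?thesis by simp
qed

lemma powr_le_powr_diff_div:
  fixes m a :: real
  assumes "m > 1" "a < 0"
  shows "m powr (a - 1) \<le> ((m - 1) powr a - m powr a) / - a"
proof -
  have "\<exists>z. m - 1 < z \<and> z < m \<and>
      m powr a - (m - 1) powr a = (m - (m - 1)) * (a * z powr (a - 1))"
    using assms by (intro MVT2 has_real_derivative_powr) auto
  then obtain z where z: "m - 1 < z" "z < m" "m powr a - (m - 1) powr a = a * z powr (a - 1)"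
    by auto
  have "m powr (a - 1) \<le> z powr (a - 1)"
    using z assms by (intro powr_mono2') auto
  then have "- a * m powr (a - 1) \<le> - a * z powr (a - 1)"
    using assms by (simp add: mult_left_mono)
  then have "- a * m powr (a - 1) \<le> (m - 1) powr a - m powr a"
    using z(3) by simp
  then show ?thesis
    using assms by (simp add: field_simps)
qed

lemma powr_telescope_sums:
  fixes a :: real
  assumes "a < 0"
  shows "(\<lambda>k. (real (k + n0) - 1) powr a - real (k + n0) powr a) sums ((real n0 - 1) powr a)"
proof -
  define F where "F k = (real (k + n0) - 1) powr a" for k
  have "filterlim (\<lambda>k. (real n0 - 1) + real k) at_top sequentially"
    by (rule filterlim_tendsto_add_at_top[OF tendsto_const filterlim_real_sequentially])
  then have "filterlim (\<lambda>k. real (k + n0) - 1) at_top sequentially"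
    by (simp add: algebra_simps)
  then have "F \<longlonglongrightarrow> 0"
    unfolding F_def using assms by (intro tendsto_neg_powr) auto
  then have "(\<lambda>k. F k - F (Suc k)) sums (F 0 - 0)"
    by (rule telescope_sums')
  then show ?thesis
    by (simp add: F_def)
qed

lemma norm_dser_le_linear:
  fixes c :: real and s :: complex and d :: "nat \<Rightarrow> nat"
  assumes "n0 \<ge> 2" and "Re s > 2" and d_le: "\<And>n. n \<ge> n0 \<Longrightarrow> real (d n) \<le> c * n"
  shows "cmod (dser d n0 s) \<le> c * (real n0 - 1) powr (2 - Re s) / (Re s - 2)"
proof -
  define a where "a = 2 - Re s"
  have a: "a < 0" using assms(2) by (simp add: a_def)
  define t where "t k = of_nat (d (k + n0)) * (of_nat (k + n0) :: complex) powr (- s)" for k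
  define g where "g k = c * ((real (k + n0) - 1) powr a - real (k + n0) powr a) / - a" for k
  have g_sums: "g sums (c * (real n0 - 1) powr a / - a)"
    unfolding g_def by (intro sums_divide sums_mult powr_telescope_sums a)
  have c: "c \<ge> 0"
  proof -
    have "0 \<le> c * real n0"
      using d_le[of n0] of_nat_0_le_iff[of "d n0"] by linarith
    then show ?thesis
      using assms(1) by (simp add: zero_le_mult_iff)
  qed
  have t_le: "norm (t k) \<le> g k" for k
  proof -
    define m where "m = real (k + n0)"
    have m: "m \<ge> 2" using assms(1) by (simp add: m_def)
    have "norm (t k) = real (d (k + n0)) * m powr (- Re s)"
      unfolding t_def m_def by (simp add: norm_mult norm_powr_real_powr)
    also have "\<dots> \<le> c * m * m powr (- Re s)"
      using d_le[of "k + n0"] unfolding m_def by (intro mult_right_mono) auto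
    also have "\<dots> = c * m powr (a - 1)"
    proof -
      have "m powr (a - 1) = m powr (1 + - Re s)"
        by (simp add: a_def)
      also have "\<dots> = m * m powr (- Re s)"
        unfolding powr_add using m by simp
      finally have "m * m powr (- Re s) = m powr (a - 1)" ..
      then show ?thesis by (simp add: mult.assoc)
    qed
    also have "\<dots> \<le> c * (((m - 1) powr a - m powr a) / - a)"
      using powr_le_powr_diff_div[of m a] m a by (intro mult_left_mono[OF _ c]) auto
    also have "\<dots> = g k"
      by (simp add: g_def m_def)
    finally show ?thesis .
  qed
  have summable_g: "summable g"
    using g_sums by (rule sums_summable)
  have summable_norm_t: "summable (\<lambda>k. norm (t k))"
    using t_le by (intro summable_comparison_test[OF _ summable_g]) simp
  have "cmod (dser d n0 s) = norm (suminf t)"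
    unfolding dser_def t_def by simp
  also have "\<dots> \<le> (\<Sum>k. norm (t k))"
    by (rule summable_norm[OF summable_norm_t])
  also have "\<dots> \<le> suminf g"
    by (rule suminf_le[OF t_le summable_norm_t summable_g])
  also have "\<dots> = c * (real n0 - 1) powr (2 - Re s) / (Re s - 2)"
    using g_sums by (simp add: sums_iff a_def)
  finally show ?thesis .
qed

theorem lemmaI3:
  fixes n0 :: nat and s :: complex and d :: "nat \<Rightarrow> nat"
  assumes "n0 \<ge> 2" and "Re s > 2" and "d \<in> {xcount, ycount, zcount}"
  shows "cmod (dser d n0 s) \<le> 2 * (real n0 - 1) powr (2 - Re s) / (Re s - 2)"
proof (rule norm_dser_le_linear[OF assms(1,2)])
  fix n :: nat
  show "real (d n) \<le> 2 * real n"
    using assms(3) xcount_le[of n] ycount_le[of n] zcount_le[of n] by auto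
qed

end
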